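(* For every $g\ge 1$, $\det(A_{g+1})=4[\det(A_g)]^2[\det(K_g)]^2$.
   Context: The graphs $\mathcal{H}_g$ with hubs $v_1,v_2,v_3,v_4$ and orientations $\mathcal{H}_g^e$ are defined recursively. $\mathcal{H}_1$ is the 4-cycle with edges $\{v_1,v_2\},\{v_1,v_3\},\{v_2,v_4\},\{v_3,v_4\}$, oriented $v_1\to v_2$, $v_1\to v_3$, $v_4\to v_2$, $v_3\to v_4$. For $g>1$, take four disjoint copies $\mathcal{H}_{g-1}^{(i)}$, $i=1,\dots,4$, of $\mathcal{H}_{g-1}$, each oriented as a copy of $\mathcal{H}_{g-1}^e$, with hubs $v_k^{(i)}$; identify $v_1^{(1)},v_1^{(4)}$ as $v_1$, $v_2^{(2)},v_1^{(3)}$ as $v_4$, $v_2^{(1)},v_1^{(2)}$ as $v_3$, and $v_2^{(3)},v_2^{(4)}$ as $v_2$; $\mathcal{H}_g^e$ is the union of the copies' orientations. $A_g$ is the skew adjacency matrix of $\mathcal{H}_g^e$: its $(u,v)$ entry is $1$ if $u\to v$ is an arc, $-1$ if $v\to u$ is an arc, and $0$ otherwise. $K_g$ is the submatrix of $A_g$ obtained by deleting the rows and columns corresponding to $v_1$ and $v_2$. *)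

theory Defs
  imports "Jordan_Normal_Form.Determinant"
begin

text \<open>Vertices of H_g are the naturals 0 ..< nv g.  Hubs: v1 = 0, v2 = 1, v3 = 2, v4 = 3.
  The index g \<ge> 1 is used as in the paper; g = 0 is a dummy.\<close>

fun nv :: "nat \<Rightarrow> nat" where
  "nv 0 = 0"
| "nv (Suc 0) = 4"
| "nv (Suc (Suc g)) = 4 * nv (Suc g) - 4"

text \<open>Image of hub v_{k+1} (k = 0,1) of copy i+1 in the next graph:
  copy 1: v1->v1, v2->v3; copy 2: v1->v3, v2->v4; copy 3: v1->v4, v2->v2; copy 4: v1->v1, v2->v2.
  Only hubs v1, v2 of a copy are identified; its other vertices (incl. its v3,v4) stay distinct.\<close>

definition hub_img :: "nat \<Rightarrow> nat \<Rightarrow> nat" where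
  "hub_img i k = [[0,2],[2,3],[3,1],[0,1::nat]] ! i ! k"

definition emb :: "nat \<Rightarrow> nat \<Rightarrow> nat \<Rightarrow> nat" where
  "emb g i u = (if u < 2 then hub_img i u else 4 + i * (nv g - 2) + (u - 2))"

fun arc :: "nat \<Rightarrow> nat \<Rightarrow> nat \<Rightarrow> bool" where
  "arc 0 x y = False"
| "arc (Suc 0) x y = ((x,y) \<in> {(0,1),(0,2),(3,1),(2,3)})"
| "arc (Suc (Suc g)) x y =
     (\<exists>i<4. \<exists>u<nv (Suc g). \<exists>w<nv (Suc g).
        arc (Suc g) u w \<and> x = emb (Suc g) i u \<and> y = emb (Suc g) i w)"

definition skewA :: "nat \<Rightarrow> int mat" where
  "skewA g = mat (nv g) (nv g)
     (\<lambda>(x,y). if arc g x y then 1 else if arc g y x then -1 else 0)"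

definition Kmat :: "nat \<Rightarrow> int mat" where
  "Kmat g = mat (nv g - 2) (nv g - 2) (\<lambda>(x,y). skewA g $$ (x+2, y+2))"

end

theory Submission
  imports Defs
begin

text \<open>List the vertices of \<open>H\<^sub>g\<^sub>+\<^sub>1\<close> as the four hubs followed by the inner vertices of the four
  copies. The inner block of \<open>A\<^sub>g\<^sub>+\<^sub>1\<close> is then block diagonal with four copies of \<open>K\<^sub>g\<close>, and every
  entry between a hub and an inner vertex is an entry of \<open>A\<^sub>g\<close> between a hub and an inner vertex of
  one copy. Taking the Schur complement of the inner block turns \<open>A\<^sub>g\<^sub>+\<^sub>1\<close> into \<open>z A\<^sub>1\<close>, where \<open>z\<close> is
  the off-diagonal entry of the (skew-symmetric, \<open>2 \<times> 2\<close>) Schur complement of \<open>K\<^sub>g\<close> in \<open>A\<^sub>g\<close>, scaled by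
  \<open>det K\<^sub>g\<close> to avoid division. This gives \<open>det A\<^sub>g \<cdot> det K\<^sub>g = z\<^sup>2\<close>, \<open>det A\<^sub>g\<^sub>+\<^sub>1 = 4 z\<^sup>4\<close> and
  \<open>det K\<^sub>g\<^sub>+\<^sub>1 = z\<^sup>2 (det K\<^sub>g)\<^sup>2\<close>; the last two identities show inductively that \<open>det K\<^sub>g \<noteq> 0\<close>,
  which justifies the cancellations.\<close>

section \<open>The graphs \<open>H\<^sub>g\<close>\<close>

lemma less_four_iff: "(i::nat) < 4 \<longleftrightarrow> i = 0 \<or> i = 1 \<or> i = 2 \<or> i = 3"
  by auto

lemma less_two_iff: "(k::nat) < 2 \<longleftrightarrow> k = 0 \<or> k = 1"
  by auto

lemma four_le_nv: "0 < g \<Longrightarrow> 4 \<le> nv g"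
proof (induction g)
  case (Suc g) then show ?case by (cases g) auto
qed simp

lemma nv_Suc: "0 < g \<Longrightarrow> nv (Suc g) = 4 * nv g - 4"
  by (cases g) auto

lemma even_nv: "0 < g \<Longrightarrow> even (nv g)"
proof (induction g)
  case (Suc g) then show ?case by (cases g) auto
qed simp

lemma arc_Suc: "0 < g \<Longrightarrow> arc (Suc g) x y \<longleftrightarrow>
    (\<exists>i<4. \<exists>u<nv g. \<exists>w<nv g. arc g u w \<and> x = emb g i u \<and> y = emb g i w)"
  by (cases g) auto

lemma arc_1_iff: "arc (Suc 0) x y \<longleftrightarrow> (x = 0 \<and> y = 1) \<or> (x = 0 \<and> y = 2) \<or> (x = 3 \<and> y = 1) \<or> (x = 2 \<and> y = 3)"
  by (simp only: arc.simps insert_iff empty_iff prod.inject simp_thms)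

lemma arc_1_asym: "\<not> (arc (Suc 0) x y \<and> arc (Suc 0) y x)"
  unfolding arc_1_iff by linarith

lemma hub_img_less_four: "i < 4 \<Longrightarrow> k < 2 \<Longrightarrow> hub_img i k < 4"
  unfolding less_four_iff less_two_iff by (auto simp: hub_img_def)

lemma hub_img_inj: "i < 4 \<Longrightarrow> k < 2 \<Longrightarrow> l < 2 \<Longrightarrow> hub_img i k = hub_img i l \<Longrightarrow> k = l"
  unfolding less_four_iff less_two_iff by (auto simp: hub_img_def)

lemma hub_img_pair_eq_imp_same_copy:
  "i < 4 \<Longrightarrow> j < 4 \<Longrightarrow> u < 2 \<Longrightarrow> w < 2 \<Longrightarrow> u' < 2 \<Longrightarrow> w' < 2 \<Longrightarrow> u \<noteq> w \<Longrightarrow>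
    hub_img i u = hub_img j u' \<Longrightarrow> hub_img i w = hub_img j w' \<Longrightarrow> i = j"
  unfolding less_four_iff less_two_iff by (auto simp: hub_img_def)

lemma emb_hub: "u < 2 \<Longrightarrow> emb g i u = hub_img i u"
  by (simp add: emb_def)

lemma emb_inner: "u < nv g - 2 \<Longrightarrow> emb g i (u + 2) = 4 + (i * (nv g - 2) + u)"
  by (simp add: emb_def)

lemma four_le_emb: "2 \<le> u \<Longrightarrow> 4 \<le> emb g i u"
  by (simp add: emb_def)

lemma emb_less_four_imp_hub: "emb g i u < 4 \<Longrightarrow> u < 2 \<and> hub_img i u = emb g i u"
  using four_le_emb[of u g i] emb_hub[of u g i] by (cases "u < 2") auto

lemma emb_less_nv_Suc:
  assumes "0 < g" "i < 4" "u < nv g"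
  shows "emb g i u < nv (Suc g)"
proof (cases "u < 2")
  case True
  then show ?thesis
    using hub_img_less_four[OF assms(2) True] four_le_nv[OF assms(1)] nv_Suc[OF assms(1)]
    by (simp add: emb_def)
next
  case False
  define n where "n = nv g - 2"
  have "emb g i u = 4 + (i * n + (u - 2))"
    using False by (simp add: emb_def n_def)
  moreover have "i * n + (u - 2) < 4 * n"
  proof -
    have "i * n \<le> 3 * n" using assms(2) by simp
    moreover have "u - 2 < n" using assms(3) False by (simp add: n_def)
    ultimately show ?thesis by linarith
  qed
  moreover have "nv (Suc g) = 4 + 4 * n"
    using four_le_nv[OF assms(1)] nv_Suc[OF assms(1)] by (simp add: n_def)
  ultimately show ?thesis by linarith
qed

lemma emb_eq_emb_cases:
  assumes "i < 4" "j < 4" "u < nv g" "v < nv g" "emb g i u = emb g j v"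
  shows "(i = j \<and> u = v) \<or> (u < 2 \<and> v < 2)"
proof (cases "u < 2 \<or> v < 2")
  case True
  then show ?thesis
    using assms(5) hub_img_less_four[OF assms(1)] hub_img_less_four[OF assms(2)]
      four_le_emb[of u g i] four_le_emb[of v g j] emb_hub[of u g i] emb_hub[of v g j]
    by (metis not_le)
next
  case False
  let ?n = "nv g - 2"
  have eq: "i * ?n + (u - 2) = j * ?n + (v - 2)" and bounds: "u - 2 < ?n" "v - 2 < ?n"
    using assms(3-5) False by (auto simp: emb_def)
  then have "i = j"
    by (metis add.commute div_mult_self1 div_less add_0 less_nat_zero_code)
  moreover from this have "u - 2 = v - 2" using eq by simp
  ultimately show ?thesis using False by linarith
qed

lemma emb_inj:
  assumes "i < 4" "u < nv g" "v < nv g" "emb g i u = emb g i v"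
  shows "u = v"
proof -
  have "u = v \<or> (u < 2 \<and> v < 2)"
    using emb_eq_emb_cases[OF assms(1,1,2,3,4)] by blast
  then show ?thesis using hub_img_inj[OF assms(1)] assms(4) emb_hub by metis
qed

lemma emb_pair_eq:
  assumes "i < 4" "j < 4" "u < nv g" "w < nv g" "u' < nv g" "w' < nv g" "u \<noteq> w"
    and eq_u: "emb g i u = emb g j u'" and eq_w: "emb g i w = emb g j w'"
  shows "i = j \<and> u = u' \<and> w = w'"
proof (cases "i = j")
  case True
  then show ?thesis using emb_inj[OF assms(1)] assms(3-6) eq_u eq_w by simp
next
  case False
  then have hubs: "u < 2" "u' < 2" "w < 2" "w' < 2"
    using emb_eq_emb_cases[OF assms(1,2,3,5) eq_u] emb_eq_emb_cases[OF assms(1,2,4,6) eq_w] by auto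
  have "hub_img i u = hub_img j u'" "hub_img i w = hub_img j w'"
    using eq_u eq_w emb_hub hubs by metis+
  then show ?thesis
    using hub_img_pair_eq_imp_same_copy[OF assms(1,2) hubs(1,3,2,4) assms(7)] False by simp
qed

lemma arc_asym: "0 < g \<Longrightarrow> arc g x y \<Longrightarrow> \<not> arc g y x"
proof (induction g arbitrary: x y)
  case (Suc g)
  show ?case
  proof (cases "g = 0")
    case True
    then show ?thesis using Suc.prems(2) arc_1_asym by (simp del: arc.simps)
  next
    case False
    then have g: "0 < g" by simp
    show ?thesis
    proof
      assume "arc (Suc g) y x"
      then obtain j u' w' where j: "j < 4" "u' < nv g" "w' < nv g" "arc g u' w'"
          "y = emb g j u'" "x = emb g j w'"
        unfolding arc_Suc[OF g] by auto
      from Suc.prems(2) obtain i u w where i: "i < 4" "u < nv g" "w < nv g" "arc g u w"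
          "x = emb g i u" "y = emb g i w"
        unfolding arc_Suc[OF g] by auto
      have "u \<noteq> w" using Suc.IH[OF g i(4)] i(4) by auto
      moreover have "emb g i u = emb g j w'" "emb g i w = emb g j u'"
        using i(5,6) j(5,6) by simp_all
      ultimately have "u = w' \<and> w = u'"
        using emb_pair_eq[OF i(1) j(1) i(2,3) j(3,2)] by blast
      then show False using Suc.IH[OF g i(4)] j(4) by auto
    qed
  qed
qed simp

lemma arc_irrefl: "0 < g \<Longrightarrow> \<not> arc g x x"
  using arc_asym by blast

lemma arc_Suc_emb_iff:
  assumes g: "0 < g" and "i < 4" "u < nv g" "w < nv g"
  shows "arc (Suc g) (emb g i u) (emb g i w) \<longleftrightarrow> arc g u w"
proof
  assume "arc (Suc g) (emb g i u) (emb g i w)"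
  then obtain j u' w' where j: "j < 4" "u' < nv g" "w' < nv g" "arc g u' w'"
      "emb g i u = emb g j u'" "emb g i w = emb g j w'"
    unfolding arc_Suc[OF g] by auto
  show "arc g u w"
  proof (cases "u = w")
    case True
    then have "u' = w'" using emb_inj[OF j(1-3)] j(5,6) by simp
    then show ?thesis using arc_irrefl[OF g] j(4) by simp
  next
    case False
    then show ?thesis using emb_pair_eq[OF assms(2) j(1) assms(3,4) j(2,3) False j(5,6)] j(4) by simp
  qed
next
  assume "arc g u w"
  then show "arc (Suc g) (emb g i u) (emb g i w)"
    unfolding arc_Suc[OF g] using assms by blast
qed

lemma skewA_nth:
  "x < nv g \<Longrightarrow> y < nv g \<Longrightarrow>
    skewA g $$ (x, y) = (if arc g x y then 1 else if arc g y x then -1 else 0)"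
  by (simp add: skewA_def)

lemma dim_skewA [simp]: "dim_row (skewA g) = nv g" "dim_col (skewA g) = nv g"
  by (simp_all add: skewA_def)

lemma skewA_carrier [simp]: "skewA g \<in> carrier_mat (nv g) (nv g)"
  by (simp add: skewA_def)

lemma skewA_skew: "0 < g \<Longrightarrow> x < nv g \<Longrightarrow> y < nv g \<Longrightarrow> skewA g $$ (y, x) = - skewA g $$ (x, y)"
  using arc_asym[of g x y] arc_asym[of g y x] by (simp add: skewA_nth)

lemma skewA_diag: "0 < g \<Longrightarrow> x < nv g \<Longrightarrow> skewA g $$ (x, x) = 0"
  using skewA_skew[of g x x] by simp

lemma skewA_Suc_emb:
  assumes "0 < g" "i < 4" "u < nv g" "w < nv g"
  shows "skewA (Suc g) $$ (emb g i u, emb g i w) = skewA g $$ (u, w)"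
  using arc_Suc_emb_iff[OF assms] arc_Suc_emb_iff[OF assms(1,2,4,3)]
  by (simp add: skewA_nth emb_less_nv_Suc assms)

lemma skewA_Suc_eq_0:
  assumes g: "0 < g" and "x < nv (Suc g)" "y < nv (Suc g)"
    and no_copy: "\<And>i u w. i < 4 \<Longrightarrow> u < nv g \<Longrightarrow> w < nv g \<Longrightarrow> x = emb g i u \<Longrightarrow> y = emb g i w \<Longrightarrow> False"
  shows "skewA (Suc g) $$ (x, y) = 0"
proof -
  have "\<not> arc (Suc g) x y" "\<not> arc (Suc g) y x"
    unfolding arc_Suc[OF g] using no_copy by blast+
  then show ?thesis by (simp add: skewA_nth assms)
qed

section \<open>Block matrices\<close>

text \<open>Schur complement with respect to \<open>D\<close>, where the inverse of \<open>D\<close> is replaced by any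
  \<open>X\<close> with \<open>D * X = c \<cdot> 1\<close> (such as the adjugate), so that no division is needed.\<close>

lemma det_four_block_mat_adj_schur:
  fixes P Q R D X :: "'a::idom mat"
  assumes P: "P \<in> carrier_mat p p" and Q: "Q \<in> carrier_mat p q" and R: "R \<in> carrier_mat q p"
    and D: "D \<in> carrier_mat q q" and X: "X \<in> carrier_mat q q" and DX: "D * X = c \<cdot>\<^sub>m 1\<^sub>m q"
  shows "det (four_block_mat P Q R D) * c ^ p = det (c \<cdot>\<^sub>m P - Q * X * R) * det D"
proof -
  define E where "E = four_block_mat (c \<cdot>\<^sub>m 1\<^sub>m p) (0\<^sub>m p q) (- (X * R)) (1\<^sub>m q)"
  have XR: "X * R \<in> carrier_mat q p" using X R by simp
  have M: "four_block_mat P Q R D \<in> carrier_mat (p + q) (p + q)" using P D by simp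
  have "det (four_block_mat P Q R D) * det E = det (four_block_mat P Q R D * E)"
    by (rule det_mult[OF M, symmetric]) (simp add: E_def)
  also have "four_block_mat P Q R D * E = four_block_mat
      (P * (c \<cdot>\<^sub>m 1\<^sub>m p) + Q * (- (X * R))) (P * 0\<^sub>m p q + Q * 1\<^sub>m q)
      (R * (c \<cdot>\<^sub>m 1\<^sub>m p) + D * (- (X * R))) (R * 0\<^sub>m p q + D * 1\<^sub>m q)"
    unfolding E_def by (rule mult_four_block_mat[OF P Q R D]) (use XR in auto)
  also have "P * (c \<cdot>\<^sub>m 1\<^sub>m p) + Q * (- (X * R)) = c \<cdot>\<^sub>m P - Q * X * R"
  proof -
    have "P * (c \<cdot>\<^sub>m 1\<^sub>m p) = c \<cdot>\<^sub>m P" using mult_smult_distrib[OF P, of "1\<^sub>m p" p c] P by simp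
    moreover have "Q * (- (X * R)) = - (Q * X * R)" using Q X R by simp
    ultimately show ?thesis using minus_add_uminus_mat[of "c \<cdot>\<^sub>m P" p p "Q * X * R"] P Q X R by simp
  qed
  also have "P * 0\<^sub>m p q + Q * 1\<^sub>m q = Q" using P Q by simp
  also have "R * (c \<cdot>\<^sub>m 1\<^sub>m p) + D * (- (X * R)) = 0\<^sub>m q p"
  proof -
    have "R * (c \<cdot>\<^sub>m 1\<^sub>m p) = c \<cdot>\<^sub>m R" using mult_smult_distrib[OF R, of "1\<^sub>m p" p c] R by simp
    moreover have "D * (- (X * R)) = - ((D * X) * R)" using D X R by simp
    moreover have "(D * X) * R = c \<cdot>\<^sub>m R"
      unfolding DX using mult_smult_assoc_mat[of "1\<^sub>m q" q q R p c] R by simp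
    ultimately show ?thesis using R by (intro eq_matI) auto
  qed
  also have "R * 0\<^sub>m p q + D * 1\<^sub>m q = D" using R D by simp
  also have "det (four_block_mat (c \<cdot>\<^sub>m P - Q * X * R) Q (0\<^sub>m q p) D) = det (c \<cdot>\<^sub>m P - Q * X * R) * det D"
    by (rule det_four_block_mat_lower_left_zero[of _ p _ q]) (use P Q X R D in auto)
  also have "det E = c ^ p" unfolding E_def
    by (subst det_four_block_mat_upper_right_zero[of _ p _ q]) (use XR in auto)
  finally show ?thesis .
qed

lemma mat_delete_first_row:
  "mat_delete (mat (Suc n) (Suc n) f) 0 j = mat n n (\<lambda>(i', j'). f (Suc i', if j' < j then j' else Suc j'))"
  unfolding mat_delete_def by (rule eq_matI) auto

lemma det_mat_Suc:
  fixes f :: "nat \<times> nat \<Rightarrow> 'a::comm_ring_1"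
  shows "det (mat (Suc n) (Suc n) f) = (\<Sum>j<Suc n. f (0, j) * ((-1) ^ j *
    det (mat n n (\<lambda>(i', j'). f (Suc i', if j' < j then j' else Suc j')))))"
  by (subst laplace_expansion_row[of _ "Suc n" 0]) (auto simp: cofactor_def mat_delete_first_row)

lemma det_mat_2:
  fixes M :: "'a::comm_ring_1 mat"
  assumes "M \<in> carrier_mat 2 2"
  shows "det M = M $$ (0, 0) * M $$ (1, 1) - M $$ (0, 1) * M $$ (1, 0)"
proof -
  have "M = mat 2 2 (\<lambda>(i, j). M $$ (i, j))" by (rule eq_matI) (use assms in auto)
  then have "det M = det (mat 2 2 (\<lambda>(i, j). M $$ (i, j)))" by simp
  also have "\<dots> = M $$ (0, 0) * M $$ (1, 1) - M $$ (0, 1) * M $$ (1, 0)"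
    by (simp add: numeral_2_eq_2 det_mat_Suc del: mat_delete_first_row)
  finally show ?thesis .
qed

lemma sum_lessThan_mult_split:
  fixes F :: "nat \<Rightarrow> 'a::comm_monoid_add"
  shows "(\<Sum>s<k * m. F s) = (\<Sum>i<k. \<Sum>s<m. F (i * m + s))"
proof -
  have "(\<Sum>s<k * m. F s) = (\<Sum>i<k. sum F {i * m..<i * m + m})"
    using sum.nat_group[of F m k] by simp
  also have "\<dots> = (\<Sum>i<k. \<Sum>s<m. F (i * m + s))"
  proof (rule sum.cong[OF refl])
    fix i
    have "sum F {0 + i * m..<m + i * m} = (\<Sum>s\<in>{0..<m}. F (s + i * m))"
      by (rule sum.shift_bounds_nat_ivl)
    then show "sum F {i * m..<i * m + m} = (\<Sum>s<m. F (i * m + s))"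
      by (simp add: add.commute atLeast0LessThan)
  qed
  finally show ?thesis .
qed

lemma sum_lessThan_mult_block:
  fixes h :: "nat \<Rightarrow> 'a::comm_monoid_add"
  assumes "i < k"
  shows "(\<Sum>r<k * m. if r div m = i then h r else 0) = (\<Sum>r<m. h (i * m + r))"
proof -
  have "(\<Sum>r<k * m. if r div m = i then h r else 0) =
      (\<Sum>i'<k. \<Sum>r<m. if (i' * m + r) div m = i then h (i' * m + r) else 0)"
    by (rule sum_lessThan_mult_split)
  also have "\<dots> = (\<Sum>i'<k. if i' = i then (\<Sum>r<m. h (i * m + r)) else 0)"
    by (rule sum.cong[OF refl]) auto
  also have "\<dots> = (\<Sum>r<m. h (i * m + r))" using assms by simp
  finally show ?thesis .
qed

lemma bilinear_form_expand:
  fixes h0 h1 g0 g1 :: "'a::comm_ring_1"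
  shows "(\<Sum>t<m. (\<Sum>s<m. (h0 * u0 s + h1 * u1 s) * M s t) * (g0 * v0 t + g1 * v1 t)) =
    h0 * g0 * (\<Sum>t<m. (\<Sum>s<m. u0 s * M s t) * v0 t) + h0 * g1 * (\<Sum>t<m. (\<Sum>s<m. u0 s * M s t) * v1 t)
  + h1 * g0 * (\<Sum>t<m. (\<Sum>s<m. u1 s * M s t) * v0 t) + h1 * g1 * (\<Sum>t<m. (\<Sum>s<m. u1 s * M s t) * v1 t)"
  by (simp add: algebra_simps sum.distrib sum_distrib_left sum_distrib_right)

definition diag_copies_mat :: "nat \<Rightarrow> nat \<Rightarrow> 'a::zero mat \<Rightarrow> 'a mat" where
  "diag_copies_mat k m F = mat (k * m) (k * m)
     (\<lambda>(s, t). if s div m = t div m then F $$ (s mod m, t mod m) else 0)"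

lemma diag_copies_mat_carrier [simp]: "diag_copies_mat k m F \<in> carrier_mat (k * m) (k * m)"
  by (simp add: diag_copies_mat_def)

lemma dim_diag_copies_mat [simp]:
  "dim_row (diag_copies_mat k m F) = k * m" "dim_col (diag_copies_mat k m F) = k * m"
  by (simp_all add: diag_copies_mat_def)

lemma index_diag_copies_mat:
  "s < k * m \<Longrightarrow> t < k * m \<Longrightarrow>
    diag_copies_mat k m F $$ (s, t) = (if s div m = t div m then F $$ (s mod m, t mod m) else 0)"
  by (simp add: diag_copies_mat_def)

lemma diag_copies_mat_Suc:
  assumes F: "F \<in> carrier_mat m m" and m: "0 < m"
  shows "diag_copies_mat (Suc k) m F =
    four_block_mat F (0\<^sub>m m (k * m)) (0\<^sub>m (k * m) m) (diag_copies_mat k m F)"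
proof (rule eq_matI)
  fix i j assume "i < dim_row (four_block_mat F (0\<^sub>m m (k * m)) (0\<^sub>m (k * m) m) (diag_copies_mat k m F))"
    and "j < dim_col (four_block_mat F (0\<^sub>m m (k * m)) (0\<^sub>m (k * m) m) (diag_copies_mat k m F))"
  then have i: "i < m + k * m" and j: "j < m + k * m" using F by auto
  have shift: "x div m = Suc ((x - m) div m) \<and> x mod m = (x - m) mod m" if "\<not> x < m" for x
    using that m le_div_geq le_mod_geq by simp
  show "diag_copies_mat (Suc k) m F $$ (i, j) =
      four_block_mat F (0\<^sub>m m (k * m)) (0\<^sub>m (k * m) m) (diag_copies_mat k m F) $$ (i, j)"
    using i j F shift[of i] shift[of j]
    by (cases "i < m"; cases "j < m") (auto simp: index_diag_copies_mat)
qed (use F in auto)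

lemma det_diag_copies_mat:
  fixes F :: "'a::idom mat"
  assumes F: "F \<in> carrier_mat m m" and m: "0 < m"
  shows "det (diag_copies_mat k m F) = det F ^ k"
proof (induction k)
  case 0
  show ?case by (simp add: diag_copies_mat_def)
next
  case (Suc k)
  show ?case unfolding diag_copies_mat_Suc[OF F m]
    by (subst det_four_block_mat_upper_right_zero[of F m _ "k * m"]) (use F Suc in auto)
qed

lemma diag_copies_mat_mult:
  fixes F H :: "'a::comm_ring_1 mat"
  assumes F: "F \<in> carrier_mat m m" and H: "H \<in> carrier_mat m m"
  shows "diag_copies_mat k m F * diag_copies_mat k m H = diag_copies_mat k m (F * H)"
proof (rule eq_matI)
  fix s t assume "s < dim_row (diag_copies_mat k m (F * H))" "t < dim_col (diag_copies_mat k m (F * H))"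
  then have s: "s < k * m" and t: "t < k * m" by (auto simp: diag_copies_mat_def)
  have sk: "s div m < k" using s by (simp add: less_mult_imp_div_less)
  have "(diag_copies_mat k m F * diag_copies_mat k m H) $$ (s, t) =
      (\<Sum>r<k * m. diag_copies_mat k m F $$ (s, r) * diag_copies_mat k m H $$ (r, t))"
    using s t by (simp add: scalar_prod_def atLeast0LessThan)
  also have "\<dots> = (\<Sum>r<k * m. if r div m = s div m then F $$ (s mod m, r mod m) *
      (if s div m = t div m then H $$ (r mod m, t mod m) else 0) else 0)"
    by (rule sum.cong[OF refl]) (use s t in \<open>auto simp: index_diag_copies_mat\<close>)
  also have "\<dots> = (\<Sum>r<m. F $$ (s mod m, (s div m * m + r) mod m) *
      (if s div m = t div m then H $$ ((s div m * m + r) mod m, t mod m) else 0))"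
    by (rule sum_lessThan_mult_block[OF sk])
  also have "\<dots> = (\<Sum>r<m. F $$ (s mod m, r) * (if s div m = t div m then H $$ (r, t mod m) else 0))"
    by (rule sum.cong[OF refl]) simp
  also have "\<dots> = (if s div m = t div m then (F * H) $$ (s mod m, t mod m) else 0)"
    using F H s by (cases m) (simp_all add: scalar_prod_def atLeast0LessThan)
  also have "\<dots> = diag_copies_mat k m (F * H) $$ (s, t)" using s t by (simp add: index_diag_copies_mat)
  finally show "(diag_copies_mat k m F * diag_copies_mat k m H) $$ (s, t) = diag_copies_mat k m (F * H) $$ (s, t)" .
qed (auto simp: diag_copies_mat_def)

lemma diag_copies_mat_smult_one:
  fixes c :: "'a::comm_ring_1"
  shows "diag_copies_mat k m (c \<cdot>\<^sub>m 1\<^sub>m m) = c \<cdot>\<^sub>m 1\<^sub>m (k * m)"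
proof (rule eq_matI)
  fix s t assume "s < dim_row (c \<cdot>\<^sub>m 1\<^sub>m (k * m))" "t < dim_col (c \<cdot>\<^sub>m 1\<^sub>m (k * m))"
  then have s: "s < k * m" and t: "t < k * m" by auto
  then have "0 < m" by (cases m) auto
  moreover have "s = t \<longleftrightarrow> s div m = t div m \<and> s mod m = t mod m" by (metis div_mult_mod_eq)
  ultimately show "diag_copies_mat k m (c \<cdot>\<^sub>m 1\<^sub>m m) $$ (s, t) = (c \<cdot>\<^sub>m 1\<^sub>m (k * m)) $$ (s, t)"
    using s t by (simp add: index_diag_copies_mat)
qed (auto simp: diag_copies_mat_def)

text \<open>Minors of a skew-symmetric matrix of even order have odd order, so transposition flips their sign.\<close>

lemma adj_mat_skew:
  fixes K :: "'a::comm_ring_1 mat"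
  assumes K: "K \<in> carrier_mat m m" and "even m"
    and skew: "\<And>x y. x < m \<Longrightarrow> y < m \<Longrightarrow> K $$ (y, x) = - K $$ (x, y)"
    and s: "s < m" and t: "t < m"
  shows "adj_mat K $$ (t, s) = - adj_mat K $$ (s, t)"
proof -
  have tr: "transpose_mat (mat_delete K t s) = (-1) \<cdot>\<^sub>m mat_delete K s t"
  proof (rule eq_matI)
    fix i j assume "i < dim_row ((-1) \<cdot>\<^sub>m mat_delete K s t)" "j < dim_col ((-1) \<cdot>\<^sub>m mat_delete K s t)"
    then have i: "i < m - 1" and j: "j < m - 1" using K by auto
    have "(if i < s then i else Suc i) < m" "(if j < t then j else Suc j) < m" using i j s t by auto
    from skew[OF this] show "transpose_mat (mat_delete K t s) $$ (i, j) = ((-1) \<cdot>\<^sub>m mat_delete K s t) $$ (i, j)"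
      using i j K by (simp add: mat_delete_def)
  qed (use K in auto)
  have md: "mat_delete K t s \<in> carrier_mat (m - 1) (m - 1)" "mat_delete K s t \<in> carrier_mat (m - 1) (m - 1)"
    using K by (auto intro: mat_delete_carrier)
  have "odd (m - 1)" using \<open>even m\<close> s by (cases m) auto
  have "det (mat_delete K t s) = det (transpose_mat (mat_delete K t s))"
    using det_transpose[OF md(1)] by simp
  also have "\<dots> = (-1) ^ (m - 1) * det (mat_delete K s t)" unfolding tr using md K by simp
  also have "\<dots> = - det (mat_delete K s t)" using \<open>odd (m - 1)\<close> by simp
  finally have minors: "det (mat_delete K t s) = - det (mat_delete K s t)" .
  have "adj_mat K $$ (t, s) = cofactor K s t" "adj_mat K $$ (s, t) = cofactor K t s"
    using K s t by (simp_all add: adj_mat_def)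
  then show ?thesis unfolding cofactor_def minors by (simp add: add.commute)
qed

section \<open>The recursion step\<close>

text \<open>\<open>z\<close> times the skew adjacency matrix of \<open>H\<^sub>1\<close>: the hubs of \<open>H\<^sub>g\<^sub>+\<^sub>1\<close> span a copy of \<open>H\<^sub>1\<close>,
  whose arcs \<open>v\<^sub>1v\<^sub>3\<close>, \<open>v\<^sub>3v\<^sub>4\<close>, \<open>v\<^sub>4v\<^sub>2\<close>, \<open>v\<^sub>1v\<^sub>2\<close> are the images of \<open>v\<^sub>1v\<^sub>2\<close> in copies 1 to 4.\<close>

definition hub_pattern :: "'a::comm_ring_1 \<Rightarrow> nat \<Rightarrow> nat \<Rightarrow> 'a" where
  "hub_pattern z x y = [[0, z, z, 0], [-z, 0, 0, -z], [-z, 0, 0, z], [0, z, -z, 0]] ! x ! y"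

lemma hub_pattern_diff:
  "x < 4 \<Longrightarrow> y < 4 \<Longrightarrow> d * hub_pattern p x y - hub_pattern q x y = hub_pattern (d * p - q) x y"
  unfolding less_four_iff hub_pattern_def by (elim disjE) (simp_all add: algebra_simps)

lemma det_hub_pattern:
  fixes M :: "'a::comm_ring_1 mat"
  assumes "M \<in> carrier_mat 4 4" and "\<And>x y. x < 4 \<Longrightarrow> y < 4 \<Longrightarrow> M $$ (x, y) = hub_pattern z x y"
  shows "det M = 4 * z ^ 4"
proof -
  have "M = mat 4 4 (\<lambda>(x, y). [[0, z, z, 0], [-z, 0, 0, -z], [-z, 0, 0, z], [0, z, -z, 0]] ! x ! y)"
    by (rule eq_matI) (use assms in \<open>auto simp: hub_pattern_def\<close>)
  then show ?thesis by (simp add: numeral_eq_Suc det_mat_Suc)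
qed

definition hub_ind :: "nat \<Rightarrow> nat \<Rightarrow> nat \<Rightarrow> int" where
  "hub_ind i x k = (if hub_img i k = x then 1 else 0)"

text \<open>Entry \<open>(k, l)\<close> of \<open>B adj(K\<^sub>g) C\<close>, where \<open>B\<close> and \<open>C\<close> are the hub-to-inner and inner-to-hub blocks of \<open>A\<^sub>g\<close>.\<close>

definition hub_coupling :: "nat \<Rightarrow> nat \<Rightarrow> nat \<Rightarrow> int" where
  "hub_coupling g k l = (\<Sum>t<nv g - 2.
     (\<Sum>s<nv g - 2. skewA g $$ (k, s + 2) * adj_mat (Kmat g) $$ (s, t)) * skewA g $$ (t + 2, l))"

text \<open>The off-diagonal entry of the adjugate Schur complement \<open>det K\<^sub>g \<cdot> H - B adj(K\<^sub>g) C\<close> of \<open>K\<^sub>g\<close> in \<open>A\<^sub>g\<close>.\<close>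

definition hub_schur :: "nat \<Rightarrow> int" where
  "hub_schur g = det (Kmat g) * skewA g $$ (0, 1) - hub_coupling g 0 1"

context
  fixes G :: nat
  assumes G_pos: "0 < G"
begin

abbreviation m where "m \<equiv> nv G - 2"

lemma nv_inner: "nv G = m + 2" "nv (Suc G) = 4 + 4 * m" "even m" "0 < m"
proof -
  have "4 \<le> nv G" "nv (Suc G) = 4 * nv G - 4" "even (nv G)"
    using four_le_nv[OF G_pos] nv_Suc[OF G_pos] even_nv[OF G_pos] by auto
  then show "nv G = m + 2" "nv (Suc G) = 4 + 4 * m" "0 < m" by auto
  show "even m" using \<open>even (nv G)\<close> \<open>4 \<le> nv G\<close> by presburger
qed

lemma Kmat_nth: "x < m \<Longrightarrow> y < m \<Longrightarrow> Kmat G $$ (x, y) = skewA G $$ (x + 2, y + 2)"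
  by (simp add: Kmat_def)

lemma Kmat_carrier: "Kmat G \<in> carrier_mat m m"
  by (simp add: Kmat_def)

lemma Kmat_skew: "x < m \<Longrightarrow> y < m \<Longrightarrow> Kmat G $$ (y, x) = - Kmat G $$ (x, y)"
  using skewA_skew[OF G_pos, of "x + 2" "y + 2"] nv_inner by (simp add: Kmat_nth)

lemma skewA_hub_entries: "skewA G $$ (0, 0) = 0" "skewA G $$ (1, 1) = 0" "skewA G $$ (1, 0) = - skewA G $$ (0, 1)"
  using skewA_diag[OF G_pos, of 0] skewA_diag[OF G_pos, of 1] skewA_skew[OF G_pos, of 0 1] nv_inner by auto

lemma hub_coupling_skew:
  assumes "k < 2" "l < 2"
  shows "hub_coupling G l k = - hub_coupling G k l"
proof -
  let ?a = "skewA G" and ?J = "adj_mat (Kmat G)"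
  have expand: "hub_coupling G k' l' = (\<Sum>t<m. \<Sum>s<m. ?a $$ (k', s + 2) * ?J $$ (s, t) * ?a $$ (t + 2, l'))"
    for k' l' unfolding hub_coupling_def by (simp add: sum_distrib_right)
  have "?a $$ (l, s + 2) * ?J $$ (s, t) * ?a $$ (t + 2, k) = - (?a $$ (k, t + 2) * ?J $$ (t, s) * ?a $$ (s + 2, l))"
    if "s < m" "t < m" for s t
  proof -
    have bounds: "s + 2 < nv G" "t + 2 < nv G" "k < nv G" "l < nv G" using that assms nv_inner by auto
    have "?a $$ (l, s + 2) = - ?a $$ (s + 2, l)" "?a $$ (t + 2, k) = - ?a $$ (k, t + 2)"
      using skewA_skew[OF G_pos bounds(1,4)] skewA_skew[OF G_pos bounds(3,2)] by simp_all
    moreover have "?J $$ (s, t) = - ?J $$ (t, s)"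
      using adj_mat_skew[OF Kmat_carrier nv_inner(3) Kmat_skew that(2,1)] by simp
    ultimately show ?thesis by (simp add: algebra_simps)
  qed
  then have "hub_coupling G l k = (\<Sum>t<m. \<Sum>s<m. - (?a $$ (k, t + 2) * ?J $$ (t, s) * ?a $$ (s + 2, l)))"
    unfolding expand by (intro sum.cong) auto
  also have "\<dots> = - hub_coupling G k l"
    unfolding expand by (subst sum.swap) (simp add: sum_negf)
  finally show ?thesis .
qed

lemma hub_coupling_entries:
  "hub_coupling G 0 0 = 0" "hub_coupling G 1 1 = 0" "hub_coupling G 1 0 = - hub_coupling G 0 1"
  using hub_coupling_skew[of 0 0] hub_coupling_skew[of 1 1] hub_coupling_skew[of 0 1] by simp_all

lemma inner_index: "s < 4 * m \<Longrightarrow> s = s div m * m + s mod m \<and> s div m < 4 \<and> s mod m < m"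
  using nv_inner(4) div_mult_mod_eq[of s m] by (simp add: less_mult_imp_div_less)

lemma skewA_Suc_inner:
  assumes s: "s < 4 * m" and t: "t < 4 * m"
  shows "skewA (Suc G) $$ (4 + s, 4 + t) = diag_copies_mat 4 m (Kmat G) $$ (s, t)"
proof -
  define i s' j t' where "i = s div m" "s' = s mod m" "j = t div m" "t' = t mod m"
  have "i < 4" "s' < m" "j < 4" "t' < m"
    using inner_index[OF s] inner_index[OF t] by (auto simp: i_s'_j_t'_def)
  then have bounds: "i < 4" "s' < m" "j < 4" "t' < m" "s' + 2 < nv G" "t' + 2 < nv G"
    using nv_inner by auto
  have es: "4 + s = emb G i (s' + 2)" and et: "4 + t = emb G j (t' + 2)"
    using inner_index[OF s] inner_index[OF t] bounds emb_inner by (auto simp: i_s'_j_t'_def)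
  have "skewA (Suc G) $$ (4 + s, 4 + t) = (if i = j then Kmat G $$ (s', t') else 0)"
  proof (cases "i = j")
    case True
    then show ?thesis
      unfolding es et using skewA_Suc_emb[OF G_pos bounds(3,5,6)] Kmat_nth[OF bounds(2,4)] by simp
  next
    case False
    have "skewA (Suc G) $$ (4 + s, 4 + t) = 0"
    proof (rule skewA_Suc_eq_0[OF G_pos])
      show "4 + s < nv (Suc G)" "4 + t < nv (Suc G)" using s t nv_inner by auto
      fix k u w assume k: "k < 4" "u < nv G" "w < nv G" "4 + s = emb G k u" "4 + t = emb G k w"
      have "i = k" using emb_eq_emb_cases[OF bounds(1) k(1) bounds(5) k(2)] es k(4) by auto
      moreover have "j = k" using emb_eq_emb_cases[OF bounds(3) k(1) bounds(6) k(3)] et k(5) by auto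
      ultimately show False using False by simp
    qed
    then show ?thesis using False by simp
  qed
  then show ?thesis using s t by (simp add: index_diag_copies_mat i_s'_j_t'_def)
qed

lemma skewA_Suc_hub_inner:
  assumes x: "x < 4" and i: "i < 4" and s: "s < m"
  shows "skewA (Suc G) $$ (x, 4 + (i * m + s)) =
    hub_ind i x 0 * skewA G $$ (0, s + 2) + hub_ind i x 1 * skewA G $$ (1, s + 2)"
proof -
  have e: "4 + (i * m + s) = emb G i (s + 2)" using emb_inner s by simp
  have b: "s + 2 < nv G" "0 < nv G" "1 < nv G" using s nv_inner by auto
  have h01: "hub_img i 0 \<noteq> hub_img i 1" using hub_img_inj[OF i, of 0 1] by auto
  consider "x = hub_img i 0" | "x = hub_img i 1" | "x \<noteq> hub_img i 0" "x \<noteq> hub_img i 1" by blast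
  then show ?thesis
  proof cases
    case 1
    then show ?thesis
      unfolding e using skewA_Suc_emb[OF G_pos i b(2) b(1)] emb_hub[of 0 G i] h01 by (simp add: hub_ind_def)
  next
    case 2
    then show ?thesis
      unfolding e using skewA_Suc_emb[OF G_pos i b(3) b(1)] emb_hub[of 1 G i] h01 by (simp add: hub_ind_def)
  next
    case 3
    have "skewA (Suc G) $$ (x, 4 + (i * m + s)) = 0"
    proof (rule skewA_Suc_eq_0[OF G_pos])
      show "x < nv (Suc G)" "4 + (i * m + s) < nv (Suc G)"
        using x nv_inner e emb_less_nv_Suc[OF G_pos i b(1)] by auto
      fix k u w assume k: "k < 4" "u < nv G" "w < nv G" "x = emb G k u" "4 + (i * m + s) = emb G k w"
      have "i = k" using emb_eq_emb_cases[OF i k(1) b(1) k(3)] e k(5) by auto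
      moreover have "u < 2 \<and> hub_img k u = x" using emb_less_four_imp_hub x k(4) by metis
      ultimately show False using 3 less_two_iff by auto
    qed
    then show ?thesis using 3 by (simp add: hub_ind_def)
  qed
qed

lemma skewA_Suc_inner_hub:
  assumes y: "y < 4" and i: "i < 4" and t: "t < m"
  shows "skewA (Suc G) $$ (4 + (i * m + t), y) =
    hub_ind i y 0 * skewA G $$ (t + 2, 0) + hub_ind i y 1 * skewA G $$ (t + 2, 1)"
proof -
  have b: "4 + (i * m + t) < nv (Suc G)" "y < nv (Suc G)"
    using emb_less_nv_Suc[OF G_pos i, of "t + 2"] emb_inner t nv_inner y by auto
  have c: "t + 2 < nv G" "0 < nv G" "1 < nv G" using t nv_inner by auto
  have "skewA (Suc G) $$ (4 + (i * m + t), y) = - skewA (Suc G) $$ (y, 4 + (i * m + t))"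
    using skewA_skew[of "Suc G", OF _ b(2) b(1)] by simp
  also have "\<dots> = - (hub_ind i y 0 * skewA G $$ (0, t + 2) + hub_ind i y 1 * skewA G $$ (1, t + 2))"
    using skewA_Suc_hub_inner[OF y i t] by simp
  also have "\<dots> = hub_ind i y 0 * skewA G $$ (t + 2, 0) + hub_ind i y 1 * skewA G $$ (t + 2, 1)"
    using skewA_skew[OF G_pos c(2) c(1)] skewA_skew[OF G_pos c(3) c(1)] by (simp add: algebra_simps)
  finally show ?thesis .
qed

lemma skewA_Suc_hub:
  assumes x: "x < 4" and y: "y < 4"
  shows "skewA (Suc G) $$ (x, y) = hub_pattern (skewA G $$ (0, 1)) x y"
proof -
  let ?A = "skewA (Suc G)" and ?p = "skewA G $$ (0, 1)"
  have same_copy: "?A $$ (hub_img i k, hub_img i l) = skewA G $$ (k, l)" if "i < 4" "k < 2" "l < 2" for i k l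
    using skewA_Suc_emb[OF G_pos that(1), of k l] emb_hub that nv_inner by simp
  have no_copy: "?A $$ (x', y') = 0" if "x' < 4" "y' < 4"
    and "\<And>i k l. i < 4 \<Longrightarrow> k < 2 \<Longrightarrow> l < 2 \<Longrightarrow> \<not> (hub_img i k = x' \<and> hub_img i l = y')" for x' y'
  proof (rule skewA_Suc_eq_0[OF G_pos])
    show "x' < nv (Suc G)" "y' < nv (Suc G)" using that nv_inner by auto
    fix i u w assume "i < 4" "u < nv G" "w < nv G" "x' = emb G i u" "y' = emb G i w"
    then show False using emb_less_four_imp_hub that by metis
  qed
  have hubs: "?A $$ (0, 1) = ?p" "?A $$ (1, 0) = - ?p" "?A $$ (0, 2) = ?p" "?A $$ (2, 0) = - ?p"
    "?A $$ (2, 3) = ?p" "?A $$ (3, 2) = - ?p" "?A $$ (3, 1) = ?p" "?A $$ (1, 3) = - ?p"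
    using same_copy[of 3 0 1] same_copy[of 3 1 0] same_copy[of 0 0 1] same_copy[of 0 1 0]
      same_copy[of 1 0 1] same_copy[of 1 1 0] same_copy[of 2 0 1] same_copy[of 2 1 0] skewA_hub_entries(3)
    by (simp_all add: hub_img_def)
  have zeros: "?A $$ (0, 3) = 0" "?A $$ (3, 0) = 0" "?A $$ (1, 2) = 0" "?A $$ (2, 1) = 0"
    by (rule no_copy; auto simp: less_four_iff less_two_iff hub_img_def)+
  have "?A $$ (z, z) = 0" if "z < 4" for z using skewA_diag[of "Suc G" z] that nv_inner by simp
  then show ?thesis using x y hubs zeros unfolding less_four_iff hub_pattern_def by (elim disjE) simp_all
qed

text \<open>Only the copies containing both hubs \<open>x\<close> and \<open>y\<close> contribute, each through \<open>B adj(K\<^sub>G) C\<close>.\<close>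

lemma coupling_Suc_sum_copies:
  assumes x: "x < 4" and y: "y < 4"
  shows "(\<Sum>t<4 * m. (\<Sum>s<4 * m. skewA (Suc G) $$ (x, 4 + s) * diag_copies_mat 4 m (adj_mat (Kmat G)) $$ (s, t))
      * skewA (Suc G) $$ (4 + t, y)) =
    (\<Sum>i<4. hub_ind i x 0 * hub_ind i y 0 * hub_coupling G 0 0 + hub_ind i x 0 * hub_ind i y 1 * hub_coupling G 0 1
      + hub_ind i x 1 * hub_ind i y 0 * hub_coupling G 1 0 + hub_ind i x 1 * hub_ind i y 1 * hub_coupling G 1 1)"
proof -
  let ?A = "skewA (Suc G)" and ?a = "skewA G" and ?J = "adj_mat (Kmat G)"
  let ?X = "diag_copies_mat 4 m (adj_mat (Kmat G))"
  let ?B = "\<lambda>i s. hub_ind i x 0 * ?a $$ (0, s + 2) + hub_ind i x 1 * ?a $$ (1, s + 2)"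
  let ?C = "\<lambda>i t. hub_ind i y 0 * ?a $$ (t + 2, 0) + hub_ind i y 1 * ?a $$ (t + 2, 1)"
  have block: "(\<Sum>s<4 * m. ?A $$ (x, 4 + s) * ?X $$ (s, i * m + t)) * ?A $$ (4 + (i * m + t), y) =
      (\<Sum>s<m. ?B i s * ?J $$ (s, t)) * ?C i t" if i: "i < 4" and t: "t < m" for i t
  proof -
    have "i * m + t < (i + 1) * m" using t by simp
    moreover have "(i + 1) * m \<le> 4 * m" using i by (intro mult_le_mono1) simp
    ultimately have "i * m + t < 4 * m" by linarith
    then have "(\<Sum>s<4 * m. ?A $$ (x, 4 + s) * ?X $$ (s, i * m + t)) =
        (\<Sum>s<4 * m. if s div m = i then ?A $$ (x, 4 + s) * ?J $$ (s mod m, t) else 0)"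
      using t by (intro sum.cong) (auto simp: index_diag_copies_mat)
    also have "\<dots> = (\<Sum>s<m. ?A $$ (x, 4 + (i * m + s)) * ?J $$ ((i * m + s) mod m, t))"
      by (rule sum_lessThan_mult_block[OF i])
    also have "\<dots> = (\<Sum>s<m. ?B i s * ?J $$ (s, t))"
      by (intro sum.cong) (use skewA_Suc_hub_inner[OF x i] in auto)
    finally show ?thesis using skewA_Suc_inner_hub[OF y i t] by simp
  qed
  have "(\<Sum>t<4 * m. (\<Sum>s<4 * m. ?A $$ (x, 4 + s) * ?X $$ (s, t)) * ?A $$ (4 + t, y)) =
      (\<Sum>i<4. \<Sum>t<m. (\<Sum>s<4 * m. ?A $$ (x, 4 + s) * ?X $$ (s, i * m + t)) * ?A $$ (4 + (i * m + t), y))"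
    by (rule sum_lessThan_mult_split)
  also have "\<dots> = (\<Sum>i<4. \<Sum>t<m. (\<Sum>s<m. ?B i s * ?J $$ (s, t)) * ?C i t)"
    using block by (intro sum.cong) auto
  also have "\<dots> = (\<Sum>i<4. hub_ind i x 0 * hub_ind i y 0 * hub_coupling G 0 0 + hub_ind i x 0 * hub_ind i y 1 * hub_coupling G 0 1
      + hub_ind i x 1 * hub_ind i y 0 * hub_coupling G 1 0 + hub_ind i x 1 * hub_ind i y 1 * hub_coupling G 1 1)"
    unfolding hub_coupling_def by (intro sum.cong refl bilinear_form_expand)
  finally show ?thesis .
qed

lemma coupling_Suc:
  assumes x: "x < 4" and y: "y < 4"
  shows "(\<Sum>t<4 * m. (\<Sum>s<4 * m. skewA (Suc G) $$ (x, 4 + s) * diag_copies_mat 4 m (adj_mat (Kmat G)) $$ (s, t))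
      * skewA (Suc G) $$ (4 + t, y)) = hub_pattern (hub_coupling G 0 1) x y"
proof -
  have sum_four: "(\<Sum>i<4. f i) = f 0 + f 1 + f 2 + f 3" for f :: "nat \<Rightarrow> int"
    by (simp add: numeral_eq_Suc add.commute add.left_commute)
  show ?thesis
    using x y unfolding coupling_Suc_sum_copies[OF x y] sum_four less_four_iff hub_pattern_def hub_coupling_entries
    by (elim disjE) (simp_all add: hub_ind_def hub_img_def)
qed

lemma hub_schur_Suc:
  assumes "x < 4" "y < 4"
  shows "det (Kmat G) * skewA (Suc G) $$ (x, y) -
    (\<Sum>t<4 * m. (\<Sum>s<4 * m. skewA (Suc G) $$ (x, 4 + s) * diag_copies_mat 4 m (adj_mat (Kmat G)) $$ (s, t))
      * skewA (Suc G) $$ (4 + t, y)) = hub_pattern (hub_schur G) x y"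
  unfolding skewA_Suc_hub[OF assms] coupling_Suc[OF assms] hub_pattern_diff[OF assms] hub_schur_def ..

lemma skewA_four_block:
  "four_block_mat (mat 2 2 (\<lambda>(k, l). skewA G $$ (k, l))) (mat 2 m (\<lambda>(k, s). skewA G $$ (k, s + 2)))
     (mat m 2 (\<lambda>(s, l). skewA G $$ (s + 2, l))) (Kmat G) = skewA G"
proof (rule eq_matI)
  fix i j assume "i < dim_row (skewA G)" "j < dim_col (skewA G)"
  then have "i < 2 + m" "j < 2 + m" using nv_inner by auto
  moreover have "\<not> x < 2 \<Longrightarrow> Suc (Suc (x - 2)) = x" for x by simp
  ultimately show "four_block_mat (mat 2 2 (\<lambda>(k, l). skewA G $$ (k, l))) (mat 2 m (\<lambda>(k, s). skewA G $$ (k, s + 2)))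
      (mat m 2 (\<lambda>(s, l). skewA G $$ (s + 2, l))) (Kmat G) $$ (i, j) = skewA G $$ (i, j)"
    using Kmat_carrier by (cases "i < 2"; cases "j < 2") (simp_all add: Kmat_nth)
qed (use nv_inner Kmat_carrier in auto)

lemma skewA_Suc_four_block:
  "four_block_mat (mat 4 4 (\<lambda>(x, y). skewA (Suc G) $$ (x, y)))
     (mat 4 (4 * m) (\<lambda>(x, s). skewA (Suc G) $$ (x, 4 + s)))
     (mat (4 * m) 4 (\<lambda>(s, y). skewA (Suc G) $$ (4 + s, y)))
     (diag_copies_mat 4 m (Kmat G)) = skewA (Suc G)"
proof (rule eq_matI)
  fix i j assume "i < dim_row (skewA (Suc G))" "j < dim_col (skewA (Suc G))"
  then have "i < 4 + 4 * m" "j < 4 + 4 * m" using nv_inner by auto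
  then show "four_block_mat (mat 4 4 (\<lambda>(x, y). skewA (Suc G) $$ (x, y)))
     (mat 4 (4 * m) (\<lambda>(x, s). skewA (Suc G) $$ (x, 4 + s)))
     (mat (4 * m) 4 (\<lambda>(s, y). skewA (Suc G) $$ (4 + s, y)))
     (diag_copies_mat 4 m (Kmat G)) $$ (i, j) = skewA (Suc G) $$ (i, j)"
    using skewA_Suc_inner[of "i - 4" "j - 4"] by (cases "i < 4"; cases "j < 4") simp_all
qed (use nv_inner in auto)

lemma Kmat_Suc_four_block:
  "four_block_mat (mat 2 2 (\<lambda>(x, y). skewA (Suc G) $$ (x + 2, y + 2)))
     (mat 2 (4 * m) (\<lambda>(x, s). skewA (Suc G) $$ (x + 2, 4 + s)))
     (mat (4 * m) 2 (\<lambda>(s, y). skewA (Suc G) $$ (4 + s, y + 2)))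
     (diag_copies_mat 4 m (Kmat G)) = Kmat (Suc G)"
proof (rule eq_matI)
  fix i j assume "i < dim_row (Kmat (Suc G))" "j < dim_col (Kmat (Suc G))"
  then have i: "i < 2 + 4 * m" and j: "j < 2 + 4 * m" using nv_inner by (auto simp: Kmat_def)
  have "Kmat (Suc G) $$ (i, j) = skewA (Suc G) $$ (i + 2, j + 2)" using i j nv_inner by (simp add: Kmat_def)
  moreover have "\<not> i < 2 \<Longrightarrow> 4 + (i - 2) = i + 2" "\<not> j < 2 \<Longrightarrow> 4 + (j - 2) = j + 2"
    by simp_all
  ultimately show "four_block_mat (mat 2 2 (\<lambda>(x, y). skewA (Suc G) $$ (x + 2, y + 2)))
     (mat 2 (4 * m) (\<lambda>(x, s). skewA (Suc G) $$ (x + 2, 4 + s)))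
     (mat (4 * m) 2 (\<lambda>(s, y). skewA (Suc G) $$ (4 + s, y + 2)))
     (diag_copies_mat 4 m (Kmat G)) $$ (i, j) = Kmat (Suc G) $$ (i, j)"
    using i j skewA_Suc_inner[of "i - 2" "j - 2"] by (cases "i < 2"; cases "j < 2") simp_all
qed (use nv_inner in \<open>auto simp: Kmat_def\<close>)

lemma inner_copies_mult_adj:
  "diag_copies_mat 4 m (Kmat G) * diag_copies_mat 4 m (adj_mat (Kmat G)) = det (Kmat G) \<cdot>\<^sub>m 1\<^sub>m (4 * m)"
  using diag_copies_mat_mult[OF Kmat_carrier, of "adj_mat (Kmat G)" 4] adj_mat[OF Kmat_carrier]
    diag_copies_mat_smult_one[of 4 m "det (Kmat G)"]
  by simp

lemma det_inner_copies: "det (diag_copies_mat 4 m (Kmat G)) = det (Kmat G) ^ 4"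
  using det_diag_copies_mat[OF Kmat_carrier nv_inner(4)] .

lemma det_skewA_mult_det_Kmat:
  assumes "det (Kmat G) \<noteq> 0"
  shows "det (skewA G) * det (Kmat G) = hub_schur G ^ 2"
proof -
  let ?a = "skewA G" and ?d = "det (Kmat G)" and ?J = "adj_mat (Kmat G)"
  let ?H = "mat 2 2 (\<lambda>(k, l). ?a $$ (k, l))" and ?B = "mat 2 m (\<lambda>(k, s). ?a $$ (k, s + 2))"
    and ?C = "mat m 2 (\<lambda>(s, l). ?a $$ (s + 2, l))"
  let ?W = "?d \<cdot>\<^sub>m ?H - ?B * ?J * ?C"
  have J: "?J \<in> carrier_mat m m" "Kmat G * ?J = ?d \<cdot>\<^sub>m 1\<^sub>m m" using adj_mat[OF Kmat_carrier] by auto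
  have "det ?a * ?d ^ 2 = det ?W * ?d"
    using det_four_block_mat_adj_schur[of ?H 2 ?B m ?C "Kmat G" ?J ?d] J Kmat_carrier
    unfolding skewA_four_block by auto
  moreover have "det ?W = hub_schur G ^ 2"
  proof -
    have W: "?W $$ (k, l) = ?d * ?a $$ (k, l) - hub_coupling G k l" if "k < 2" "l < 2" for k l
      using that J by (simp add: hub_coupling_def scalar_prod_def atLeast0LessThan)
    have "det ?W = ?W $$ (0, 0) * ?W $$ (1, 1) - ?W $$ (0, 1) * ?W $$ (1, 0)"
      by (rule det_mat_2) (unfold carrier_mat_def, simp)
    also have "\<dots> = (?d * ?a $$ (0, 0) - hub_coupling G 0 0) * (?d * ?a $$ (1, 1) - hub_coupling G 1 1)
        - (?d * ?a $$ (0, 1) - hub_coupling G 0 1) * (?d * ?a $$ (1, 0) - hub_coupling G 1 0)"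
      using W[of 0 0] W[of 0 1] W[of 1 0] W[of 1 1] by simp
    also have "\<dots> = hub_schur G ^ 2"
      unfolding skewA_hub_entries hub_coupling_entries
      by (simp add: hub_schur_def power2_eq_square algebra_simps)
    finally show ?thesis .
  qed
  ultimately show ?thesis using assms by (simp add: power2_eq_square)
qed

lemma det_skewA_Suc:
  assumes "det (Kmat G) \<noteq> 0"
  shows "det (skewA (Suc G)) = 4 * hub_schur G ^ 4"
proof -
  let ?A = "skewA (Suc G)" and ?d = "det (Kmat G)" and ?X = "diag_copies_mat 4 m (adj_mat (Kmat G))"
  let ?P = "mat 4 4 (\<lambda>(x, y). ?A $$ (x, y))" and ?Q = "mat 4 (4 * m) (\<lambda>(x, s). ?A $$ (x, 4 + s))"
    and ?R = "mat (4 * m) 4 (\<lambda>(s, y). ?A $$ (4 + s, y))"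
  let ?W = "?d \<cdot>\<^sub>m ?P - ?Q * ?X * ?R"
  have "det ?A * ?d ^ 4 = det ?W * ?d ^ 4"
    using det_four_block_mat_adj_schur[of ?P 4 ?Q "4 * m" ?R "diag_copies_mat 4 m (Kmat G)" ?X ?d]
      inner_copies_mult_adj det_inner_copies
    unfolding skewA_Suc_four_block by auto
  moreover have "det ?W = 4 * hub_schur G ^ 4"
  proof (rule det_hub_pattern)
    show "?W \<in> carrier_mat 4 4" unfolding carrier_mat_def by simp
    fix x y :: nat assume "x < 4" "y < 4"
    then show "?W $$ (x, y) = hub_pattern (hub_schur G) x y"
      using hub_schur_Suc by (simp add: scalar_prod_def atLeast0LessThan)
  qed
  ultimately show ?thesis using assms by simp
qed

lemma det_Kmat_Suc:
  assumes "det (Kmat G) \<noteq> 0"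
  shows "det (Kmat (Suc G)) = hub_schur G ^ 2 * det (Kmat G) ^ 2"
proof -
  let ?A = "skewA (Suc G)" and ?d = "det (Kmat G)" and ?X = "diag_copies_mat 4 m (adj_mat (Kmat G))"
  let ?P = "mat 2 2 (\<lambda>(x, y). ?A $$ (x + 2, y + 2))" and ?Q = "mat 2 (4 * m) (\<lambda>(x, s). ?A $$ (x + 2, 4 + s))"
    and ?R = "mat (4 * m) 2 (\<lambda>(s, y). ?A $$ (4 + s, y + 2))"
  let ?W = "?d \<cdot>\<^sub>m ?P - ?Q * ?X * ?R"
  have "det (Kmat (Suc G)) * ?d ^ 2 = det ?W * ?d ^ 4"
    using det_four_block_mat_adj_schur[of ?P 2 ?Q "4 * m" ?R "diag_copies_mat 4 m (Kmat G)" ?X ?d]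
      inner_copies_mult_adj det_inner_copies
    unfolding Kmat_Suc_four_block by auto
  moreover have "det ?W = hub_schur G ^ 2"
  proof -
    have "?W $$ (x, y) = hub_pattern (hub_schur G) (x + 2) (y + 2)" if "x < 2" "y < 2" for x y
      using that hub_schur_Suc[of "x + 2" "y + 2"] by (simp add: scalar_prod_def atLeast0LessThan)
    moreover have "?W \<in> carrier_mat 2 2" unfolding carrier_mat_def by simp
    ultimately show ?thesis
      unfolding det_mat_2[OF \<open>?W \<in> carrier_mat 2 2\<close>] by (simp add: hub_pattern_def power2_eq_square)
  qed
  ultimately have "det (Kmat (Suc G)) * ?d ^ 2 = (hub_schur G ^ 2 * ?d ^ 2) * ?d ^ 2"
    by (simp add: algebra_simps power_add[symmetric])
  then show ?thesis using assms by simp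
qed

end

lemma det_skewA_1: "det (skewA (Suc 0)) = 4"
proof -
  have "skewA (Suc 0) $$ (x, y) = hub_pattern 1 x y" if "x < 4" "y < 4" for x y
    using that skewA_nth[of x "Suc 0" y] unfolding arc_1_iff less_four_iff hub_pattern_def
    by (elim disjE) simp_all
  moreover have "skewA (Suc 0) \<in> carrier_mat 4 4" using skewA_carrier[of "Suc 0"] by simp
  ultimately show ?thesis using det_hub_pattern[of "skewA (Suc 0)" 1] by simp
qed

lemma det_Kmat_1: "det (Kmat (Suc 0)) = 1"
proof -
  have "Kmat (Suc 0) $$ (x, y) = skewA (Suc 0) $$ (x + 2, y + 2)" if "x < 2" "y < 2" for x y
    using that by (simp add: Kmat_def)
  moreover have "skewA (Suc 0) $$ (2, 2) = 0" "skewA (Suc 0) $$ (2, 3) = 1"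
    "skewA (Suc 0) $$ (3, 2) = -1" "skewA (Suc 0) $$ (3, 3) = 0"
    using skewA_nth[of _ "Suc 0"] unfolding arc_1_iff by simp_all
  moreover have "Kmat (Suc 0) \<in> carrier_mat 2 2" by (simp add: Kmat_def)
  ultimately show ?thesis by (simp add: det_mat_2 numeral_eq_Suc)
qed

lemma det_skewA_Kmat_nonzero: "0 < g \<Longrightarrow> det (skewA g) \<noteq> 0 \<and> det (Kmat g) \<noteq> 0"
proof (induction g)
  case (Suc g)
  show ?case
  proof (cases "g = 0")
    case True
    then show ?thesis using det_skewA_1 det_Kmat_1 by simp
  next
    case False
    then have g: "0 < g" by simp
    with Suc.IH have "det (skewA g) \<noteq> 0" and d: "det (Kmat g) \<noteq> 0" by auto
    then have "hub_schur g \<noteq> 0" using det_skewA_mult_det_Kmat[OF g d] by auto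
    then show ?thesis using det_skewA_Suc[OF g d] det_Kmat_Suc[OF g d] d by simp
  qed
qed simp

theorem lemma8:
  fixes g :: nat
  assumes "g \<ge> 1"
  shows "det (skewA (g + 1)) = 4 * (det (skewA g))^2 * (det (Kmat g))^2"
proof -
  have g: "0 < g" using assms by simp
  have d: "det (Kmat g) \<noteq> 0" using det_skewA_Kmat_nonzero[OF g] by simp
  have "det (skewA (g + 1)) = 4 * (hub_schur g ^ 2) ^ 2"
    using det_skewA_Suc[OF g d] by simp
  also have "\<dots> = 4 * (det (skewA g) * det (Kmat g)) ^ 2"
    unfolding det_skewA_mult_det_Kmat[OF g d] ..
  finally show ?thesis by (simp add: power_mult_distrib)
qed

end
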